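(* Let $(P,h)$ be a minimal floor plan. Then $B(P,h)\subseteq P$. In particular, if $(P,Q,h)$ is a minimal compatible floor plan, then $B(P,h)\subseteq P$ and $B(Q,h)\subseteq Q$.
   Context: A floor plan is a pair $(P,h)$ of sequences $P=(p_1,\dots,p_r)$, $p_i\in\mathbb{N}^2$, and $h=(h_1,\dots,h_r)$, $h_i$ positive integers; a compatible floor plan is a triple $(P,Q,h)$ with $(P,h),(Q,h)$ floor plans. "$q\in P$" means $q=p_i$ for some $i$. A North-East path is a sequence $(q_1,\dots,q_m)$ in $\mathbb{N}^2$ with $q_{j+1}-q_j\in\{(1,0),(0,1)\}$, originating at $q_1$; its score w.r.t. $(P,h)$ is $\sum_{i:\,p_i\in\{q_1,\dots,q_m\}}h_i$, and $\max\mathrm{score}_{(P,h)}(q)$ is the maximal score of a path originating at $q$. Let $\lambda_{(P,h)}=\{(x,y,z)\in\mathbb{N}^3: z<\max\mathrm{score}_{(P,h)}(x,y)\}$. For floor plans with the same $h$: $(P',h)\le(P,h)$ iff $\lambda_{(P',h)}\subseteq\lambda_{(P,h)}$. For compatible floor plans with the same $h$: $(P',Q',h)\le(P,Q,h)$ iff $\lambda_{(P',h)}\subseteq\lambda_{(P,h)}$, $\lambda_{(Q',h)}\subseteq\lambda_{(Q,h)}$, and $|\lambda_{(P',h)}\cap\lambda_{(Q',h)}|\le|\lambda_{(P,h)}\cap\lambda_{(Q,h)}|$. A (compatible) floor plan is minimal if it is minimal for these relations, i.e. there is no other one with the same $h$ that is $\le$ it but not $\ge$ it. The support is $\mathrm{supp}(P,h)=\{q\in\mathbb{N}^2:\max\mathrm{score}_{(P,h)}(q)>0\}$,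 and the border $B(P,h)$ is the set of $q\in\mathrm{supp}(P,h)$ such that $q+(1,0)\notin\mathrm{supp}(P,h)$ or $q+(0,1)\notin\mathrm{supp}(P,h)$. *)

theory Defs
  imports Main
begin

type_synonym pt = "nat \<times> nat"

definition floor_plan :: "pt list \<Rightarrow> nat list \<Rightarrow> bool" where
  "floor_plan P h \<longleftrightarrow> length P = length h \<and> (\<forall>i<length h. 0 < h ! i)"

definition compatible_floor_plan :: "pt list \<Rightarrow> pt list \<Rightarrow> nat list \<Rightarrow> bool" where
  "compatible_floor_plan P Q h \<longleftrightarrow> floor_plan P h \<and> floor_plan Q h"

definition NE_path :: "pt list \<Rightarrow> bool" where
  "NE_path qs \<longleftrightarrow> qs \<noteq> [] \<and>
     (\<forall>j. Suc j < length qs \<longrightarrow>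
        qs ! Suc j = (fst (qs ! j) + 1, snd (qs ! j)) \<or>
        qs ! Suc j = (fst (qs ! j), snd (qs ! j) + 1))"

definition score :: "pt list \<Rightarrow> nat list \<Rightarrow> pt list \<Rightarrow> nat" where
  "score P h qs = (\<Sum>i\<in>{i. i < length P \<and> P ! i \<in> set qs}. h ! i)"

definition maxscore :: "pt list \<Rightarrow> nat list \<Rightarrow> pt \<Rightarrow> nat" where
  "maxscore P h q = Max {score P h qs | qs. NE_path qs \<and> hd qs = q}"

definition lam :: "pt list \<Rightarrow> nat list \<Rightarrow> (nat \<times> nat \<times> nat) set" where
  "lam P h = {(x, y, z). z < maxscore P h (x, y)}"

definition fp_le :: "pt list \<Rightarrow> pt list \<Rightarrow> nat list \<Rightarrow> bool" where
  "fp_le P' P h \<longleftrightarrow> lam P' h \<subseteq> lam P h"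

definition cfp_le :: "pt list \<Rightarrow> pt list \<Rightarrow> pt list \<Rightarrow> pt list \<Rightarrow> nat list \<Rightarrow> bool" where
  "cfp_le P' Q' P Q h \<longleftrightarrow> lam P' h \<subseteq> lam P h \<and> lam Q' h \<subseteq> lam Q h \<and>
     card (lam P' h \<inter> lam Q' h) \<le> card (lam P h \<inter> lam Q h)"

definition minimal_floor_plan :: "pt list \<Rightarrow> nat list \<Rightarrow> bool" where
  "minimal_floor_plan P h \<longleftrightarrow> floor_plan P h \<and>
     (\<forall>P'. floor_plan P' h \<and> fp_le P' P h \<longrightarrow> fp_le P P' h)"

definition minimal_compatible_floor_plan :: "pt list \<Rightarrow> pt list \<Rightarrow> nat list \<Rightarrow> bool" where
  "minimal_compatible_floor_plan P Q h \<longleftrightarrow> compatible_floor_plan P Q h \<and>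
     (\<forall>P' Q'. compatible_floor_plan P' Q' h \<and> cfp_le P' Q' P Q h \<longrightarrow> cfp_le P Q P' Q' h)"

definition supp :: "pt list \<Rightarrow> nat list \<Rightarrow> pt set" where
  "supp P h = {q. maxscore P h q > 0}"

definition border :: "pt list \<Rightarrow> nat list \<Rightarrow> pt set" where
  "border P h = {q \<in> supp P h. (fst q + 1, snd q) \<notin> supp P h \<or> (fst q, snd q + 1) \<notin> supp P h}"

end

theory Submission
  imports Defs "HOL-Library.Product_Order"
begin

(*
  Let q = (a, b) be a border point of (P, h) that is not in P; transposing the coordinates if
  necessary, (a + 1, b) lies outside the support. Then every point of P weakly north-east of q
  lies in column a strictly above q. Move the lowest of them, (a, c + 1), one step down to (a, c).
  No maximal score increases, because a path through (a, c) can be rerouted straight up column a,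
  collecting every point of P it could still reach, while the maximal score at (a, c + 1) drops,
  as no path from there meets the moved point any more. So lambda shrinks strictly, contradicting
  minimality; for a compatible floor plan the intersection of the two lambdas can only shrink
  as well.
*)

definition ne_step :: "pt \<Rightarrow> pt \<Rightarrow> bool" where
  "ne_step p r \<longleftrightarrow> r = (fst p + 1, snd p) \<or> r = (fst p, snd p + 1)"

lemma NE_path_iff_successively: "NE_path qs \<longleftrightarrow> qs \<noteq> [] \<and> successively ne_step qs"
  unfolding NE_path_def successively_conv_nth ne_step_def by blast

lemma NE_path_Cons: "NE_path (p # qs) \<longleftrightarrow> qs = [] \<or> ne_step p (hd qs) \<and> NE_path qs"
  by (auto simp: NE_path_iff_successively successively_Cons)

lemma NE_path_append:
  "NE_path xs \<Longrightarrow> NE_path ys \<Longrightarrow> ne_step (last xs) (hd ys) \<Longrightarrow> NE_path (xs @ ys)"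
  by (simp add: NE_path_iff_successively successively_append_iff)

lemma NE_path_hd_le:
  assumes "NE_path qs" "p \<in> set qs"
  shows "hd qs \<le> p"
proof -
  have "successively (\<le>) qs"
    using assms(1) by (auto simp: NE_path_iff_successively ne_step_def elim!: successively_mono)
  then have "sorted_wrt (\<le>) qs"
    by (simp add: successively_conv_sorted_wrt transp_on_def)
  then show ?thesis
    using assms by (cases qs) auto
qed

lemma NE_path_swap: "NE_path (map prod.swap qs) \<longleftrightarrow> NE_path qs"
  by (auto simp: NE_path_iff_successively successively_map ne_step_def prod_eq_iff
      elim!: successively_mono)

definition column_path :: "nat \<Rightarrow> nat \<Rightarrow> nat \<Rightarrow> pt list" where
  "column_path a y n = map (Pair a) [y..<Suc (y + n)]"

lemma NE_path_column_path: "NE_path (column_path a y n)"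
  unfolding column_path_def NE_path_iff_successively successively_map
  by (simp add: successively_conv_nth ne_step_def del: upt_Suc)

lemma hd_column_path [simp]: "hd (column_path a y n) = (a, y)"
  by (simp add: column_path_def upt_rec)

lemma set_column_path: "set (column_path a y n) = {a} \<times> {y..y + n}"
  by (auto simp: column_path_def)

lemma NE_path_through:
  assumes "q \<le> p"
  shows "\<exists>qs. NE_path qs \<and> hd qs = q \<and> p \<in> set qs"
  using assms
proof (induction "fst p - fst q" arbitrary: q)
  case 0
  then have "p \<in> set (column_path (fst q) (snd q) (snd p - snd q))"
    by (auto simp: set_column_path less_eq_prod_def mem_Times_iff)
  then show ?case
    by (metis NE_path_column_path hd_column_path prod.collapse)
next
  case (Suc n)
  then have "(Suc (fst q), snd q) \<le> p" and "n = fst p - Suc (fst q)"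
    by (auto simp: less_eq_prod_def)
  then obtain qs where "NE_path qs" "hd qs = (Suc (fst q), snd q)" "p \<in> set qs"
    using Suc.hyps(1)[of "(Suc (fst q), snd q)"] by auto
  then show ?case
    by (intro exI[of _ "q # qs"]) (auto simp: NE_path_Cons ne_step_def)
qed

definition hits :: "pt list \<Rightarrow> pt list \<Rightarrow> nat set" where
  "hits P qs = {i. i < length P \<and> P ! i \<in> set qs}"

lemma score_eq_sum_hits: "score P h qs = sum ((!) h) (hits P qs)"
  by (simp add: score_def hits_def)

lemma finite_hits [simp]: "finite (hits P qs)"
  by (simp add: hits_def)

lemma score_le_if_hits_subset: "hits P' qs \<subseteq> hits P qs' \<Longrightarrow> score P' h qs \<le> score P h qs'"
  by (simp add: score_eq_sum_hits sum_mono2)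

lemma score_le_sum: "score P h qs \<le> sum ((!) h) {..<length P}"
  unfolding score_eq_sum_hits hits_def by (rule sum_mono2) auto

lemma finite_scores: "finite {score P h qs | qs. NE_path qs \<and> hd qs = q}"
  by (rule finite_subset[of _ "{..sum ((!) h) {..<length P}}"]) (auto simp: score_le_sum)

lemma score_le_maxscore: "NE_path qs \<Longrightarrow> score P h qs \<le> maxscore P h (hd qs)"
  unfolding maxscore_def by (rule Max_ge[OF finite_scores]) auto

lemma maxscore_attained:
  obtains qs where "NE_path qs" "hd qs = q" "maxscore P h q = score P h qs"
proof -
  have "{score P h qs | qs. NE_path qs \<and> hd qs = q} \<noteq> {}"
    by (auto intro!: exI[of _ "[q]"] simp: NE_path_def)
  then have "maxscore P h q \<in> {score P h qs | qs. NE_path qs \<and> hd qs = q}"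
    unfolding maxscore_def by (rule Max_in[OF finite_scores])
  then show thesis
    using that by auto
qed

lemma maxscore_le_sum: "maxscore P h q \<le> sum ((!) h) {..<length P}"
  by (metis maxscore_attained score_le_sum)

lemma maxscore_le_if_rerouting:
  assumes "\<And>qs. NE_path qs \<Longrightarrow> hd qs = q \<Longrightarrow>
             \<exists>qs'. NE_path qs' \<and> hd qs' = q \<and> hits P' qs \<subseteq> hits P qs'"
  shows "maxscore P' h q \<le> maxscore P h q"
proof -
  obtain qs where qs: "NE_path qs" "hd qs = q" "maxscore P' h q = score P' h qs"
    by (rule maxscore_attained)
  then obtain qs' where "NE_path qs'" "hd qs' = q" "hits P' qs \<subseteq> hits P qs'"
    using assms by blast
  then show ?thesis
    using qs(3) score_le_if_hits_subset score_le_maxscore by (metis order_trans)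
qed

lemma dominated_if_in_supp:
  assumes "q \<in> supp P h"
  shows "\<exists>p\<in>set P. q \<le> p"
proof -
  obtain qs where qs: "NE_path qs" "hd qs = q" "maxscore P h q = score P h qs"
    by (rule maxscore_attained)
  then have "hits P qs \<noteq> {}"
    using assms by (auto simp: supp_def score_eq_sum_hits)
  then obtain i where "i < length P" "P ! i \<in> set qs"
    by (auto simp: hits_def)
  then show ?thesis
    using NE_path_hd_le[OF qs(1)] qs(2) by (metis nth_mem)
qed

lemma in_supp_iff:
  assumes "floor_plan P h"
  shows "q \<in> supp P h \<longleftrightarrow> (\<exists>p\<in>set P. q \<le> p)"
proof
  assume "\<exists>p\<in>set P. q \<le> p"
  then obtain i where i: "i < length P" "q \<le> P ! i"
    by (auto simp: in_set_conv_nth)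
  then obtain qs where qs: "NE_path qs" "hd qs = q" "P ! i \<in> set qs"
    using NE_path_through by blast
  have "0 < h ! i"
    using assms i(1) by (simp add: floor_plan_def)
  also have "h ! i \<le> score P h qs"
    unfolding score_eq_sum_hits using i(1) qs(3) by (intro member_le_sum) (auto simp: hits_def)
  also have "\<dots> \<le> maxscore P h q"
    using score_le_maxscore[OF qs(1)] qs(2) by simp
  finally show "q \<in> supp P h"
    by (simp add: supp_def)
qed (rule dominated_if_in_supp)

lemma finite_lam: "finite (lam P h)"
proof -
  define M where "M = sum_list (map fst P) + sum_list (map snd P)"
  have "lam P h \<subseteq> {..M} \<times> {..M} \<times> {..sum ((!) h) {..<length P}}"
  proof safe
    fix x y z
    assume "(x, y, z) \<in> lam P h"
    then have "(x, y) \<in> supp P h" and z: "z < maxscore P h (x, y)"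
      by (auto simp: lam_def supp_def)
    then obtain p where "p \<in> set P" "(x, y) \<le> p"
      using dominated_if_in_supp by blast
    then have "x \<le> fst p" "y \<le> snd p" "fst p \<le> sum_list (map fst P)" "snd p \<le> sum_list (map snd P)"
      by (auto simp: less_eq_prod_def intro!: member_le_sum_list)
    then show "x \<le> M" "y \<le> M"
      by (simp_all add: M_def)
    show "z \<le> sum ((!) h) {..<length P}"
      using z maxscore_le_sum[of P h "(x, y)"] by simp
  qed
  then show ?thesis
    by (rule finite_subset) auto
qed

lemma lam_subset_iff: "lam P' h \<subseteq> lam P h \<longleftrightarrow> (\<forall>q. maxscore P' h q \<le> maxscore P h q)"
proof
  assume sub: "lam P' h \<subseteq> lam P h"
  show "\<forall>q. maxscore P' h q \<le> maxscore P h q"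
  proof (rule ccontr)
    assume "\<not> ?thesis"
    then obtain x y where "maxscore P h (x, y) < maxscore P' h (x, y)"
      by (auto simp: not_le)
    then have "(x, y, maxscore P h (x, y)) \<in> lam P' h - lam P h"
      by (simp add: lam_def)
    then show False
      using sub by blast
  qed
qed (auto simp: lam_def intro: less_le_trans)

lemma maxscore_swap_le: "maxscore (map prod.swap P) h (prod.swap q) \<le> maxscore P h q"
proof -
  obtain qs where qs: "NE_path qs" "hd qs = prod.swap q"
    "maxscore (map prod.swap P) h (prod.swap q) = score (map prod.swap P) h qs"
    by (rule maxscore_attained)
  have "hits (map prod.swap P) qs = hits P (map prod.swap qs)"
    by (auto simp: hits_def image_iff) (metis swap_swap)+
  moreover have "hd (map prod.swap qs) = q"
    using qs(1,2) by (simp add: hd_map NE_path_def)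
  ultimately show ?thesis
    using qs score_le_maxscore[of "map prod.swap qs" P h] NE_path_swap
    by (simp add: score_eq_sum_hits)
qed

lemma maxscore_swap: "maxscore (map prod.swap P) h (prod.swap q) = maxscore P h q"
  using maxscore_swap_le[of P h q] maxscore_swap_le[of "map prod.swap P" h "prod.swap q"]
  by (simp add: comp_def)

lemma swap_in_supp_iff: "prod.swap q \<in> supp (map prod.swap P) h \<longleftrightarrow> q \<in> supp P h"
  by (simp add: supp_def maxscore_swap)

lemma lam_swap_subset_iff: "lam (map prod.swap P') h \<subseteq> lam (map prod.swap P) h \<longleftrightarrow> lam P' h \<subseteq> lam P h"
  unfolding lam_subset_iff by (metis maxscore_swap swap_swap)

lemma hits_column_path_above:
  assumes column: "\<And>p. p \<in> set P \<Longrightarrow> (a, c) \<le> p \<Longrightarrow> fst p = a \<and> c < snd p"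
    and i: "i < length P" "(a, c) \<le> P ! i"
  shows "i \<in> hits P (column_path a (Suc c) (sum_list (map snd P)))"
  using column[OF nth_mem[OF i(1)] i(2)] member_le_sum_list[of "snd (P ! i)" "map snd P"] i(1)
  by (auto simp: hits_def set_column_path mem_Times_iff)

lemma maxscore_lower_point_le:
  assumes j: "j < length P" "P ! j = (a, Suc c)"
    and column: "\<And>p. p \<in> set P \<Longrightarrow> (a, c) \<le> p \<Longrightarrow> fst p = a \<and> c < snd p"
  shows "maxscore (P[j := (a, c)]) h q \<le> maxscore P h q"
proof (rule maxscore_le_if_rerouting)
  fix qs
  assume qs: "NE_path qs" "hd qs = q"
  show "\<exists>qs'. NE_path qs' \<and> hd qs' = q \<and> hits (P[j := (a, c)]) qs \<subseteq> hits P qs'"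
  proof (cases "(a, c) \<in> set qs")
    case False
    then have "hits (P[j := (a, c)]) qs \<subseteq> hits P qs"
      using j(1) by (auto simp: hits_def nth_list_update split: if_splits)
    then show ?thesis
      using qs by blast
  next
    case True
    then obtain pre post where split: "qs = (pre @ [(a, c)]) @ post"
      by (auto dest: split_list)
    define U where "U = column_path a (Suc c) (sum_list (map snd P))"
    have in_U: "P ! i \<in> set U" if "i < length P" "(a, c) \<le> P ! i" for i
      using hits_column_path_above[OF column that] by (simp add: U_def hits_def)
    have prefix: "NE_path (pre @ [(a, c)])" and suffix: "NE_path ((a, c) # post)"
      using qs(1) split by (auto simp: NE_path_iff_successively successively_append_iff)
    have "NE_path ((pre @ [(a, c)]) @ U)"
      using NE_path_append[OF prefix NE_path_column_path] by (simp add: U_def ne_step_def)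
    moreover have "hd ((pre @ [(a, c)]) @ U) = q"
      using qs(2) split by (cases pre) auto
    moreover have "hits (P[j := (a, c)]) qs \<subseteq> hits P ((pre @ [(a, c)]) @ U)"
    proof
      fix i
      assume "i \<in> hits (P[j := (a, c)]) qs"
      then have i: "i < length P" "P[j := (a, c)] ! i \<in> set qs"
        by (auto simp: hits_def)
      consider "i = j" | "i \<noteq> j" "P ! i \<in> set (pre @ [(a, c)])" | "i \<noteq> j" "P ! i \<in> set post"
        using i split j(1) by (auto simp: nth_list_update split: if_splits)
      then show "i \<in> hits P ((pre @ [(a, c)]) @ U)"
      proof cases
        case 1
        then show ?thesis using in_U[of j] j by (auto simp: hits_def)
      next
        case 3
        then have "(a, c) \<le> P ! i"
          using NE_path_hd_le[OF suffix] by auto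
        then show ?thesis using in_U i(1) by (auto simp: hits_def)
      qed (use i in \<open>auto simp: hits_def\<close>)
    qed
    ultimately show ?thesis
      by blast
  qed
qed

lemma maxscore_lower_point_less:
  assumes fp: "floor_plan P h" and j: "j < length P" "P ! j = (a, Suc c)"
    and column: "\<And>p. p \<in> set P \<Longrightarrow> (a, c) \<le> p \<Longrightarrow> fst p = a \<and> c < snd p"
  shows "maxscore (P[j := (a, c)]) h (a, Suc c) < maxscore P h (a, Suc c)"
proof -
  define U where "U = column_path a (Suc c) (sum_list (map snd P))"
  obtain qs where qs: "NE_path qs" "hd qs = (a, Suc c)"
    "maxscore (P[j := (a, c)]) h (a, Suc c) = score (P[j := (a, c)]) h qs"
    by (rule maxscore_attained)
  have "hits (P[j := (a, c)]) qs \<subseteq> hits P U - {j}"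
  proof
    fix i
    assume "i \<in> hits (P[j := (a, c)]) qs"
    then have i: "i < length P" "(a, Suc c) \<le> P[j := (a, c)] ! i"
      using NE_path_hd_le[OF qs(1)] qs(2) by (auto simp: hits_def)
    then have "i \<noteq> j" "(a, c) \<le> P ! i"
      using j(1) by (auto simp: nth_list_update less_eq_prod_def split: if_splits)
    then show "i \<in> hits P U - {j}"
      using hits_column_path_above[OF column i(1)] by (simp add: U_def)
  qed
  moreover have "j \<in> hits P U"
    using hits_column_path_above[OF column j(1)] j(2) by (simp add: U_def)
  moreover have "0 < h ! j"
    using fp j(1) by (simp add: floor_plan_def)
  ultimately have "score (P[j := (a, c)]) h qs < score P h U"
    unfolding score_eq_sum_hits by (intro sum_strict_mono2) auto
  also have "\<dots> \<le> maxscore P h (a, Suc c)"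
    using score_le_maxscore[OF NE_path_column_path] by (simp add: U_def)
  finally show ?thesis
    using qs(3) by simp
qed

lemma floor_plan_list_update: "floor_plan P h \<Longrightarrow> floor_plan (P[j := p]) h"
  by (simp add: floor_plan_def)

lemma lam_lower_point_psubset:
  assumes "floor_plan P h" "j < length P" "P ! j = (a, Suc c)"
    and "\<And>p. p \<in> set P \<Longrightarrow> (a, c) \<le> p \<Longrightarrow> fst p = a \<and> c < snd p"
  shows "lam (P[j := (a, c)]) h \<subset> lam P h"
proof -
  have "\<forall>q. maxscore (P[j := (a, c)]) h q \<le> maxscore P h q"
    using maxscore_lower_point_le[of j P a c h] assms(2-) by blast
  moreover have "maxscore (P[j := (a, c)]) h (a, Suc c) < maxscore P h (a, Suc c)"
    using maxscore_lower_point_less[of P h j a c] assms by blast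
  ultimately show ?thesis
    unfolding less_le_not_le lam_subset_iff by (meson not_le)
qed

lemma lowest_point_above_right_border:
  assumes fp: "floor_plan P h" and q: "(a, b) \<in> supp P h" "(Suc a, b) \<notin> supp P h"
    and qP: "(a, b) \<notin> set P"
  obtains j c where "j < length P" "P ! j = (a, Suc c)"
    "\<And>p. p \<in> set P \<Longrightarrow> (a, c) \<le> p \<Longrightarrow> fst p = a \<and> c < snd p"
proof -
  have column: "fst p = a \<and> b < snd p" if "p \<in> set P" "(a, b) \<le> p" for p
  proof -
    have "fst p = a"
      using in_supp_iff[OF fp, of "(Suc a, b)"] q(2) that by (auto simp: less_eq_prod_def)
    moreover have "p \<noteq> (a, b)"
      using qP that(1) by blast
    ultimately show ?thesis
      using that(2) by (auto simp: less_eq_prod_def prod_eq_iff)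
  qed
  obtain i0 where "i0 < length P" "(a, b) \<le> P ! i0"
    using in_supp_iff[OF fp] q(1) by (auto simp: in_set_conv_nth)
  then obtain j where j: "j < length P" "(a, b) \<le> P ! j"
    and lowest: "\<And>i. i < length P \<Longrightarrow> (a, b) \<le> P ! i \<Longrightarrow> snd (P ! j) \<le> snd (P ! i)"
    using ex_has_least_nat[of "\<lambda>i. i < length P \<and> (a, b) \<le> P ! i" i0 "\<lambda>i. snd (P ! i)"] by blast
  define c where "c = snd (P ! j) - 1"
  have Pj: "P ! j = (a, Suc c)" and "b \<le> c"
    using column[OF nth_mem[OF j(1)] j(2)] by (auto simp: c_def prod_eq_iff)
  show thesis
  proof (rule that[OF j(1) Pj])
    fix p
    assume "p \<in> set P" "(a, c) \<le> p"
    then obtain i where "i < length P" "P ! i = p" "(a, b) \<le> p"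
      using \<open>b \<le> c\<close> by (auto simp: in_set_conv_nth less_eq_prod_def)
    then show "fst p = a \<and> c < snd p"
      using column[OF \<open>p \<in> set P\<close>] lowest Pj by fastforce
  qed
qed

lemma exists_lam_psubset_if_right_border_not_in:
  assumes fp: "floor_plan P h" and "(a, b) \<in> supp P h" "(Suc a, b) \<notin> supp P h" "(a, b) \<notin> set P"
  shows "\<exists>P'. floor_plan P' h \<and> lam P' h \<subset> lam P h"
proof (rule lowest_point_above_right_border[OF assms])
  fix j c
  assume "j < length P" "P ! j = (a, Suc c)"
    "\<And>p. p \<in> set P \<Longrightarrow> (a, c) \<le> p \<Longrightarrow> fst p = a \<and> c < snd p"
  then show ?thesis
    using lam_lower_point_psubset[OF fp] floor_plan_list_update[OF fp] by blast
qed

lemma exists_lam_psubset_if_border_not_in: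
  assumes fp: "floor_plan P h" and q: "q \<in> border P h" "q \<notin> set P"
  shows "\<exists>P'. floor_plan P' h \<and> lam P' h \<subset> lam P h"
proof -
  obtain a b where ab: "q = (a, b)"
    by fastforce
  consider "(Suc a, b) \<notin> supp P h" | "(a, Suc b) \<notin> supp P h"
    using q(1) ab by (auto simp: border_def)
  then show ?thesis
  proof cases
    case 1
    then show ?thesis
      using exists_lam_psubset_if_right_border_not_in[OF fp] q ab by (simp add: border_def)
  next
    case 2
    have "(b, a) \<in> supp (map prod.swap P) h" "(Suc b, a) \<notin> supp (map prod.swap P) h"
      "(b, a) \<notin> set (map prod.swap P)"
      using q ab 2 swap_in_supp_iff[of "(a, b)" P h] swap_in_supp_iff[of "(a, Suc b)" P h]
      by (auto simp: border_def)
    moreover have "floor_plan (map prod.swap P) h"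
      using fp by (simp add: floor_plan_def)
    ultimately obtain P' where P': "floor_plan P' h" "lam P' h \<subset> lam (map prod.swap P) h"
      using exists_lam_psubset_if_right_border_not_in by blast
    have "map prod.swap (map prod.swap P) = P"
      by (simp add: comp_def)
    then have "lam (map prod.swap P') h \<subset> lam P h"
      using P'(2) lam_swap_subset_iff[of P' h "map prod.swap P"]
        lam_swap_subset_iff[of "map prod.swap P" h P'] by (simp add: less_le_not_le)
    moreover have "floor_plan (map prod.swap P') h"
      using P'(1) by (simp add: floor_plan_def)
    ultimately show ?thesis
      by blast
  qed
qed

lemma border_subset_if_no_lam_psubset:
  assumes "floor_plan P h" "\<And>P'. floor_plan P' h \<Longrightarrow> \<not> lam P' h \<subset> lam P h"
  shows "border P h \<subseteq> set P"
  using exists_lam_psubset_if_border_not_in[OF assms(1)] assms(2) by blast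

lemma minimal_floor_plan_no_lam_psubset:
  "minimal_floor_plan P h \<Longrightarrow> floor_plan P' h \<Longrightarrow> \<not> lam P' h \<subset> lam P h"
  by (auto simp: minimal_floor_plan_def fp_le_def)

lemma minimal_compatible_floor_plan_no_lam_psubset:
  assumes m: "minimal_compatible_floor_plan P Q h" and fp': "floor_plan P' h"
  shows "\<not> lam P' h \<subset> lam P h"
proof
  assume psub: "lam P' h \<subset> lam P h"
  then have "card (lam P' h \<inter> lam Q h) \<le> card (lam P h \<inter> lam Q h)"
    using finite_lam[of P h] by (intro card_mono) auto
  then have "cfp_le P' Q P Q h"
    using psub by (simp add: cfp_le_def)
  moreover have "compatible_floor_plan P' Q h"
    using m fp' by (simp add: minimal_compatible_floor_plan_def compatible_floor_plan_def)
  ultimately have "cfp_le P Q P' Q h"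
    using m by (simp add: minimal_compatible_floor_plan_def)
  then show False
    using psub by (auto simp: cfp_le_def)
qed

lemma minimal_compatible_floor_plan_commute:
  "minimal_compatible_floor_plan P Q h \<longleftrightarrow> minimal_compatible_floor_plan Q P h"
  unfolding minimal_compatible_floor_plan_def compatible_floor_plan_def cfp_le_def
  by (metis Int_commute)

theorem proposition5p1:
  shows "(\<forall>P h. minimal_floor_plan P h \<longrightarrow> border P h \<subseteq> set P) \<and>
         (\<forall>P Q h. minimal_compatible_floor_plan P Q h \<longrightarrow>
            border P h \<subseteq> set P \<and> border Q h \<subseteq> set Q)"
proof (intro conjI allI impI)
  fix P h
  assume m: "minimal_floor_plan P h"
  then show "border P h \<subseteq> set P"
    using border_subset_if_no_lam_psubset minimal_floor_plan_no_lam_psubset[OF m]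
    by (simp add: minimal_floor_plan_def)
next
  have left: "border P h \<subseteq> set P" if m: "minimal_compatible_floor_plan P Q h" for P Q h
    using border_subset_if_no_lam_psubset minimal_compatible_floor_plan_no_lam_psubset[OF m] m
    by (simp add: minimal_compatible_floor_plan_def compatible_floor_plan_def)
  fix P Q h
  assume m: "minimal_compatible_floor_plan P Q h"
  show "border P h \<subseteq> set P"
    using left[OF m] .
  show "border Q h \<subseteq> set Q"
    using left[OF minimal_compatible_floor_plan_commute[THEN iffD1, OF m]] .
qed

end
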